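(* Let $A\in\mathbb{R}_+^{n\times n}$ and let $x\in\mathbb{R}_+^n$ be a Perron eigenvector of $A$ normalized so that $\sum_{i=1}^n x_i=1$. (i) If for all $i,j,k$, $x_k<x_j$ implies $a_{i,k}\le a_{i,j}$, then for every $i$: $\frac{1}{n}\sum_{j=1}^n a_{i,j}\le\sum_{j=1}^n a_{i,j}x_j=\rho(A)x_i$. (ii) If for all $i,j,k$, $x_k<x_j$ implies $a_{i,k}\ge a_{i,j}$, then for every $i$: $\frac{1}{n}\sum_{j=1}^n a_{i,j}\ge\sum_{j=1}^n a_{i,j}x_j=\rho(A)x_i$. (iii) If one of the hypotheses of (i) or (ii) holds, then the following are equivalent: (a) $\frac{1}{n}\sum_{j=1}^n a_{i,j}=\sum_{j=1}^n a_{i,j}x_j=\rho(A)x_i$ for all $i$; (b) either $x_i=\frac1n$ for all $i$, or for each $i$ there is a constant $c_i$ with $a_{i,j}=c_i$ for all $j$.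
   Context: $\mathbb{R}_+^{n\times n}$ and $\mathbb{R}_+^n$ denote nonnegative $n\times n$ matrices and nonnegative vectors. $\rho(A)$ is the spectral radius (Perron root) of $A$; a Perron eigenvector is a nonzero nonnegative vector $x$ with $Ax=\rho(A)x$. *)

theory Defs
  imports "Jordan_Normal_Form.Spectral_Radius"
begin

definition perron_root :: "real mat \<Rightarrow> real" where
  "perron_root A = spectral_radius (map_mat complex_of_real A)"

definition perron_eigenvector :: "real mat \<Rightarrow> real vec \<Rightarrow> bool" where
  "perron_eigenvector A x \<longleftrightarrow>
     x \<in> carrier_vec (dim_col A) \<and> x \<noteq> 0\<^sub>v (dim_col A) \<and>
     (\<forall>i < dim_vec x. x $ i \<ge> 0) \<and> A *\<^sub>v x = perron_root A \<cdot>\<^sub>v x"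

end

theory Submission
  imports Defs
begin

text \<open>Everything reduces to Chebyshev's sum inequality, row by row: the eigen-equation gives
  \<open>\<Sum>\<^sub>j a\<^sub>i\<^sub>j x\<^sub>j = \<rho>(A) x\<^sub>i\<close>, and since \<open>\<Sum>\<^sub>j x\<^sub>j = 1\<close> the identity
  \<open>\<Sum>\<^sub>j\<^sub>,\<^sub>k (a\<^sub>i\<^sub>j - a\<^sub>i\<^sub>k)(x\<^sub>j - x\<^sub>k) = 2 (n \<Sum>\<^sub>j a\<^sub>i\<^sub>j x\<^sub>j - \<Sum>\<^sub>j a\<^sub>i\<^sub>j)\<close>
  compares the weighted and the plain row mean. The monotonicity hypotheses make every term of
  the double sum of one sign, so equality holds iff every term vanishes, i.e. iff row \<open>i\<close> is
  constant across any two distinct levels of \<open>x\<close>. If \<open>x\<close> is not constant this forces every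
  row to be constant; if it is, the normalisation gives \<open>x = 1/n\<close>.\<close>

lemma chebyshev_sum_identity:
  fixes a x :: "'b \<Rightarrow> 'a::comm_ring_1"
  shows "(\<Sum>j\<in>S. \<Sum>k\<in>S. (a j - a k) * (x j - x k)) =
    2 * (of_nat (card S) * (\<Sum>j\<in>S. a j * x j) - sum a S * sum x S)"
proof -
  have "(a j - a k) * (x j - x k) = a j * x j + a k * x k - a j * x k - a k * x j" for j k
    by (simp add: algebra_simps)
  then show ?thesis
    by (simp add: sum_subtractf sum.distrib sum_distrib_left sum_distrib_right
        sum.swap[of "\<lambda>j k. a k * x j"] algebra_simps)
qed

lemma chebyshev_sum_le:
  fixes a x :: "'b \<Rightarrow> 'a::linordered_idom"
  assumes "\<And>j k. j \<in> S \<Longrightarrow> k \<in> S \<Longrightarrow> 0 \<le> (a j - a k) * (x j - x k)"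
  shows "sum a S * sum x S \<le> of_nat (card S) * (\<Sum>j\<in>S. a j * x j)"
proof -
  have "0 \<le> (\<Sum>j\<in>S. \<Sum>k\<in>S. (a j - a k) * (x j - x k))"
    using assms by (intro sum_nonneg) auto
  then show ?thesis
    unfolding chebyshev_sum_identity by simp
qed

lemma chebyshev_sum_eq_iff:
  fixes a x :: "'b \<Rightarrow> 'a::linordered_idom"
  assumes "finite S"
    and "\<And>j k. j \<in> S \<Longrightarrow> k \<in> S \<Longrightarrow> 0 \<le> (a j - a k) * (x j - x k)"
  shows "sum a S * sum x S = of_nat (card S) * (\<Sum>j\<in>S. a j * x j) \<longleftrightarrow>
    (\<forall>j\<in>S. \<forall>k\<in>S. (a j - a k) * (x j - x k) = 0)"
proof -
  have rows: "(\<Sum>k\<in>S. (a j - a k) * (x j - x k)) = 0 \<longleftrightarrow>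
      (\<forall>k\<in>S. (a j - a k) * (x j - x k) = 0)" if "j \<in> S" for j
    using assms that by (subst sum_nonneg_eq_0_iff) auto
  have "(\<Sum>j\<in>S. \<Sum>k\<in>S. (a j - a k) * (x j - x k)) = 0 \<longleftrightarrow>
      (\<forall>j\<in>S. (\<Sum>k\<in>S. (a j - a k) * (x j - x k)) = 0)"
    using assms by (subst sum_nonneg_eq_0_iff) (auto intro!: sum_nonneg)
  with rows show ?thesis
    unfolding chebyshev_sum_identity by auto
qed

lemma prod_diff_nonneg_if_mono:
  fixes a x :: "'b \<Rightarrow> 'a::linordered_idom"
  assumes "x k < x j \<Longrightarrow> a k \<le> a j" and "x j < x k \<Longrightarrow> a j \<le> a k"
  shows "0 \<le> (a j - a k) * (x j - x k)"
  using assms by (cases "x k < x j"; cases "x j < x k")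
    (auto intro: mult_nonneg_nonneg mult_nonpos_nonpos)

lemma mean_le_weighted_mean:
  fixes a x :: "nat \<Rightarrow> real"
  assumes mono: "\<forall>j<n. \<forall>k<n. x k < x j \<longrightarrow> a k \<le> a j"
    and sum_x: "(\<Sum>j<n. x j) = 1"
  shows "(1 / real n) * (\<Sum>j<n. a j) \<le> (\<Sum>j<n. a j * x j)"
    and "(1 / real n) * (\<Sum>j<n. a j) = (\<Sum>j<n. a j * x j) \<longleftrightarrow>
      (\<forall>j<n. \<forall>k<n. (a j - a k) * (x j - x k) = 0)"
proof -
  have "n > 0"
    using sum_x by (cases n) auto
  have nonneg: "0 \<le> (a j - a k) * (x j - x k)" if "j \<in> {..<n}" "k \<in> {..<n}" for j k
    using mono that by (intro prod_diff_nonneg_if_mono) auto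
  show "(1 / real n) * (\<Sum>j<n. a j) \<le> (\<Sum>j<n. a j * x j)"
    using chebyshev_sum_le[of "{..<n}" a x, OF nonneg] sum_x \<open>n > 0\<close>
    by (simp add: field_simps)
  show "(1 / real n) * (\<Sum>j<n. a j) = (\<Sum>j<n. a j * x j) \<longleftrightarrow>
      (\<forall>j<n. \<forall>k<n. (a j - a k) * (x j - x k) = 0)"
    using chebyshev_sum_eq_iff[of "{..<n}" a x, OF _ nonneg] sum_x \<open>n > 0\<close>
    by (auto simp: field_simps)
qed

lemma weighted_mean_le_mean:
  fixes a x :: "nat \<Rightarrow> real"
  assumes mono: "\<forall>j<n. \<forall>k<n. x k < x j \<longrightarrow> a j \<le> a k"
    and sum_x: "(\<Sum>j<n. x j) = 1"
  shows "(\<Sum>j<n. a j * x j) \<le> (1 / real n) * (\<Sum>j<n. a j)"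
    and "(1 / real n) * (\<Sum>j<n. a j) = (\<Sum>j<n. a j * x j) \<longleftrightarrow>
      (\<forall>j<n. \<forall>k<n. (a j - a k) * (x j - x k) = 0)"
proof -
  have mono_neg: "\<forall>j<n. \<forall>k<n. x k < x j \<longrightarrow> - a k \<le> - a j"
    using mono by simp
  have flip: "(- a j - - a k) * (x j - x k) = - ((a j - a k) * (x j - x k))" for j k
    by (simp add: algebra_simps)
  note neg = mean_le_weighted_mean[of n x "\<lambda>j. - a j", OF mono_neg sum_x,
      unfolded flip sum_negf mult_minus_left]
  show "(\<Sum>j<n. a j * x j) \<le> (1 / real n) * (\<Sum>j<n. a j)"
    using neg(1) by simp
  show "(1 / real n) * (\<Sum>j<n. a j) = (\<Sum>j<n. a j * x j) \<longleftrightarrow>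
      (\<forall>j<n. \<forall>k<n. (a j - a k) * (x j - x k) = 0)"
    using neg(2) by simp
qed

lemma eq_if_eq_across_levels:
  assumes "j0 \<in> S" "k0 \<in> S" "x j0 \<noteq> x k0"
    and across: "\<And>j k. j \<in> S \<Longrightarrow> k \<in> S \<Longrightarrow> x j \<noteq> x k \<Longrightarrow> f j = f k"
    and "j \<in> S" "k \<in> S"
  shows "f j = f k"
proof (cases "x j = x k")
  case True
  obtain l where "l \<in> S" "x l \<noteq> x j"
    using assms(1-3) by metis
  then show ?thesis
    using across[of j l] across[of k l] \<open>j \<in> S\<close> \<open>k \<in> S\<close> True by auto
next
  case False
  then show ?thesis
    using across \<open>j \<in> S\<close> \<open>k \<in> S\<close> by blast
qed

lemma eq_inverse_if_constant_sum_one: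
  fixes x :: "nat \<Rightarrow> real"
  assumes const: "\<forall>j<n. \<forall>k<n. x j = x k" and sum_x: "(\<Sum>j<n. x j) = 1" and "i < n"
  shows "x i = 1 / real n"
proof -
  have "(\<Sum>j<n. x j) = (\<Sum>j<n. x i)"
    using const \<open>i < n\<close> by (intro sum.cong) blast+
  with sum_x \<open>i < n\<close> show ?thesis
    by (simp add: field_simps)
qed

lemma prod_diffs_vanish_iff_uniform_or_constant_rows:
  fixes a :: "nat \<Rightarrow> nat \<Rightarrow> real" and x :: "nat \<Rightarrow> real"
  assumes sum_x: "(\<Sum>j<n. x j) = 1"
  shows "(\<forall>i<n. \<forall>j<n. \<forall>k<n. (a i j - a i k) * (x j - x k) = 0) \<longleftrightarrow>
    (\<forall>i<n. x i = 1 / real n) \<or> (\<forall>i<n. \<exists>c. \<forall>j<n. a i j = c)"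
proof
  assume zero: "\<forall>i<n. \<forall>j<n. \<forall>k<n. (a i j - a i k) * (x j - x k) = 0"
  show "(\<forall>i<n. x i = 1 / real n) \<or> (\<forall>i<n. \<exists>c. \<forall>j<n. a i j = c)"
  proof (cases "\<forall>j<n. \<forall>k<n. x j = x k")
    case True
    then show ?thesis
      using eq_inverse_if_constant_sum_one[OF True sum_x] by blast
  next
    case False
    then obtain j0 k0 where levels: "j0 \<in> {..<n}" "k0 \<in> {..<n}" "x j0 \<noteq> x k0"
      by auto
    have "a i j = a i k" if "i < n" "j < n" "k < n" for i j k
      by (rule eq_if_eq_across_levels[OF levels, of "a i"]) (use zero that in auto)
    then show ?thesis
      by blast
  qed
next
  assume const: "(\<forall>i<n. x i = 1 / real n) \<or> (\<forall>i<n. \<exists>c. \<forall>j<n. a i j = c)"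
  show "\<forall>i<n. \<forall>j<n. \<forall>k<n. (a i j - a i k) * (x j - x k) = 0"
  proof (intro allI impI)
    fix i j k
    assume "i < n" "j < n" "k < n"
    from const show "(a i j - a i k) * (x j - x k) = 0"
    proof
      assume "\<forall>i<n. x i = 1 / real n"
      with \<open>j < n\<close> \<open>k < n\<close> show ?thesis
        by simp
    next
      assume "\<forall>i<n. \<exists>c. \<forall>j<n. a i j = c"
      with \<open>i < n\<close> obtain c where "\<forall>j<n. a i j = c"
        by blast
      with \<open>j < n\<close> \<open>k < n\<close> show ?thesis
        by simp
    qed
  qed
qed

lemma rows_mean_le_weighted_mean:
  fixes a :: "nat \<Rightarrow> nat \<Rightarrow> real" and x :: "nat \<Rightarrow> real"
  assumes "\<forall>i<n. \<forall>j<n. \<forall>k<n. x k < x j \<longrightarrow> a i k \<le> a i j" and "(\<Sum>j<n. x j) = 1"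
  shows "\<forall>i<n. (1 / real n) * (\<Sum>j<n. a i j) \<le> (\<Sum>j<n. a i j * x j)"
proof (intro allI impI)
  fix i assume "i < n"
  with assms show "(1 / real n) * (\<Sum>j<n. a i j) \<le> (\<Sum>j<n. a i j * x j)"
    by (intro mean_le_weighted_mean(1)) auto
qed

lemma rows_weighted_mean_le_mean:
  fixes a :: "nat \<Rightarrow> nat \<Rightarrow> real" and x :: "nat \<Rightarrow> real"
  assumes "\<forall>i<n. \<forall>j<n. \<forall>k<n. x k < x j \<longrightarrow> a i j \<le> a i k" and "(\<Sum>j<n. x j) = 1"
  shows "\<forall>i<n. (\<Sum>j<n. a i j * x j) \<le> (1 / real n) * (\<Sum>j<n. a i j)"
proof (intro allI impI)
  fix i assume "i < n"
  with assms show "(\<Sum>j<n. a i j * x j) \<le> (1 / real n) * (\<Sum>j<n. a i j)"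
    by (intro weighted_mean_le_mean(1)) auto
qed

lemma rows_mean_eq_weighted_mean_iff:
  fixes a :: "nat \<Rightarrow> nat \<Rightarrow> real" and x :: "nat \<Rightarrow> real"
  assumes mono: "(\<forall>i<n. \<forall>j<n. \<forall>k<n. x k < x j \<longrightarrow> a i k \<le> a i j) \<or>
      (\<forall>i<n. \<forall>j<n. \<forall>k<n. x k < x j \<longrightarrow> a i j \<le> a i k)"
    and sum_x: "(\<Sum>j<n. x j) = 1"
  shows "(\<forall>i<n. (1 / real n) * (\<Sum>j<n. a i j) = (\<Sum>j<n. a i j * x j)) \<longleftrightarrow>
    (\<forall>i<n. x i = 1 / real n) \<or> (\<forall>i<n. \<exists>c. \<forall>j<n. a i j = c)"
proof -
  have "(1 / real n) * (\<Sum>j<n. a i j) = (\<Sum>j<n. a i j * x j) \<longleftrightarrow>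
      (\<forall>j<n. \<forall>k<n. (a i j - a i k) * (x j - x k) = 0)" if "i < n" for i
    using mono
  proof
    assume "\<forall>i<n. \<forall>j<n. \<forall>k<n. x k < x j \<longrightarrow> a i k \<le> a i j"
    with \<open>i < n\<close> sum_x show ?thesis
      by (intro mean_le_weighted_mean(2)) auto
  next
    assume "\<forall>i<n. \<forall>j<n. \<forall>k<n. x k < x j \<longrightarrow> a i j \<le> a i k"
    with \<open>i < n\<close> sum_x show ?thesis
      by (intro weighted_mean_le_mean(2)) auto
  qed
  then have "(\<forall>i<n. (1 / real n) * (\<Sum>j<n. a i j) = (\<Sum>j<n. a i j * x j)) \<longleftrightarrow>
      (\<forall>i<n. \<forall>j<n. \<forall>k<n. (a i j - a i k) * (x j - x k) = 0)"
    by (intro all_cong)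
  also have "\<dots> \<longleftrightarrow> (\<forall>i<n. x i = 1 / real n) \<or> (\<forall>i<n. \<exists>c. \<forall>j<n. a i j = c)"
    by (rule prod_diffs_vanish_iff_uniform_or_constant_rows[OF sum_x])
  finally show ?thesis .
qed

lemma perron_eigenvector_row:
  assumes "A \<in> carrier_mat n n" "perron_eigenvector A x" "i < n"
  shows "(\<Sum>j<n. A $$ (i, j) * x $ j) = perron_root A * x $ i"
proof -
  have "x \<in> carrier_vec n" "A *\<^sub>v x = perron_root A \<cdot>\<^sub>v x"
    using assms(1,2) unfolding perron_eigenvector_def by auto
  then have "(A *\<^sub>v x) $ i = perron_root A * x $ i"
    using \<open>i < n\<close> by simp
  then show ?thesis
    using assms(1,3) \<open>x \<in> carrier_vec n\<close> by (simp add: scalar_prod_def lessThan_atLeast0)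
qed

theorem lemma2p2:
  fixes A :: "real mat" and x :: "real vec" and n :: nat
  assumes A: "A \<in> carrier_mat n n"
    and nonneg: "\<forall>i<n. \<forall>j<n. A $$ (i, j) \<ge> 0"
    and perron: "perron_eigenvector A x"
    and norm: "(\<Sum>i<n. x $ i) = 1"
  shows
    "((\<forall>i<n. \<forall>j<n. \<forall>k<n. x $ k < x $ j \<longrightarrow> A $$ (i, k) \<le> A $$ (i, j)) \<longrightarrow>
        (\<forall>i<n. (1 / real n) * (\<Sum>j<n. A $$ (i, j)) \<le> (\<Sum>j<n. A $$ (i, j) * x $ j)
               \<and> (\<Sum>j<n. A $$ (i, j) * x $ j) = perron_root A * x $ i))
     \<and> ((\<forall>i<n. \<forall>j<n. \<forall>k<n. x $ k < x $ j \<longrightarrow> A $$ (i, k) \<ge> A $$ (i, j)) \<longrightarrow>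
        (\<forall>i<n. (1 / real n) * (\<Sum>j<n. A $$ (i, j)) \<ge> (\<Sum>j<n. A $$ (i, j) * x $ j)
               \<and> (\<Sum>j<n. A $$ (i, j) * x $ j) = perron_root A * x $ i))
     \<and> (((\<forall>i<n. \<forall>j<n. \<forall>k<n. x $ k < x $ j \<longrightarrow> A $$ (i, k) \<le> A $$ (i, j)) \<or>
          (\<forall>i<n. \<forall>j<n. \<forall>k<n. x $ k < x $ j \<longrightarrow> A $$ (i, k) \<ge> A $$ (i, j))) \<longrightarrow>
        ((\<forall>i<n. (1 / real n) * (\<Sum>j<n. A $$ (i, j)) = (\<Sum>j<n. A $$ (i, j) * x $ j)
               \<and> (\<Sum>j<n. A $$ (i, j) * x $ j) = perron_root A * x $ i)
         \<longleftrightarrow> ((\<forall>i<n. x $ i = 1 / real n) \<or>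
              (\<forall>i<n. \<exists>c. \<forall>j<n. A $$ (i, j) = c))))"
proof -
  have eigen: "(\<Sum>j<n. A $$ (i, j) * x $ j) = perron_root A * x $ i" if "i < n" for i
    using perron_eigenvector_row[OF A perron that] .
  note le = rows_mean_le_weighted_mean[where a = "\<lambda>i j. A $$ (i, j)" and x = "\<lambda>j. x $ j", OF _ norm]
  note ge = rows_weighted_mean_le_mean[where a = "\<lambda>i j. A $$ (i, j)" and x = "\<lambda>j. x $ j", OF _ norm]
  note eq = rows_mean_eq_weighted_mean_iff[where a = "\<lambda>i j. A $$ (i, j)" and x = "\<lambda>j. x $ j", OF _ norm]
  show ?thesis
    using le ge eq by (simp add: eigen)
qed

end
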